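(* Let $\alpha,\beta\in[0,\pi/2]$ with $\alpha\neq\beta$ and $\alpha\neq\pi/2-\beta$. Define, in $\mathbb{C}^2\otimes\mathbb{C}^2$, $\ket{\phi^+_\theta}=\sin\theta\ket{00}+\cos\theta\ket{11}$, $\ket{\phi^-_\theta}=\cos\theta\ket{00}-\sin\theta\ket{11}$, $\ket{\psi^+_\theta}=\sin\theta\ket{01}+\cos\theta\ket{10}$, $\ket{\psi^-_\theta}=\cos\theta\ket{01}-\sin\theta\ket{10}$, and $\ket{a_1}=\ket{\phi^-_\alpha}$, $\ket{a_2}=\ket{\psi^-_\beta}$, $\ket{a_3}=\tfrac{1}{\sqrt2}(\ket{\phi^+_\alpha}+\ket{\psi^+_\beta})$, $\ket{a_4}=\tfrac{1}{\sqrt2}(\ket{\phi^+_\alpha}-\ket{\psi^+_\beta})$. Then for every choice of $i\neq j$ in $\{1,2,3,4\}$, the projector onto the two-dimensional subspace $\mathrm{Span}\{\ket{a_i},\ket{a_j}\}$ is entangled (i.e., not separable).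
   Context: $\{\ket{0},\ket{1}\}$ is the computational basis of $\mathbb{C}^2$ and $\ket{ab}=\ket{a}\otimes\ket{b}$. A positive operator on $\mathbb{C}^2\otimes\mathbb{C}^2$ is separable if it is a nonnegative combination of product operators $A\otimes B$ with $A,B\ge0$, and entangled otherwise. The states $\ket{a_1},\dots,\ket{a_4}$ form an orthonormal basis (the set $\mathcal{A}_{\pi/4}^{[\alpha,\beta]}$ in the paper). *)

theory Defs
  imports "HOL-Analysis.Analysis"
begin

text \<open>Qubit space C^2 is indexed by bool (False = |0>, True = |1>);
  C^2 (x) C^2 is indexed by bool \<times> bool, with |ab> the basis vector at index (a,b).\<close>

type_synonym qvec2 = "complex ^ (bool \<times> bool)"
type_synonym op1 = "complex ^ bool ^ bool"
type_synonym op2 = "complex ^ (bool \<times> bool) ^ (bool \<times> bool)"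

definition ket2 :: "bool \<Rightarrow> bool \<Rightarrow> qvec2" where
  "ket2 a b = (\<chi> p. if p = (a, b) then 1 else 0)"

definition kron :: "op1 \<Rightarrow> op1 \<Rightarrow> op2" where
  "kron A B = (\<chi> p q. A $ fst p $ fst q * B $ snd p $ snd q)"

definition cinner :: "complex ^ 'n \<Rightarrow> complex ^ 'n \<Rightarrow> complex" where
  "cinner u v = (\<Sum>i\<in>UNIV. cnj (u $ i) * v $ i)"

definition adjoint_mat :: "complex ^ 'n ^ 'n \<Rightarrow> complex ^ 'n ^ 'n" where
  "adjoint_mat A = (\<chi> i j. cnj (A $ j $ i))"

definition hermitian :: "complex ^ 'n ^ 'n \<Rightarrow> bool" where
  "hermitian A \<longleftrightarrow> adjoint_mat A = A"

definition psd :: "complex ^ 'n ^ 'n \<Rightarrow> bool" where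
  "psd A \<longleftrightarrow> (\<forall>v. cinner v (A *v v) \<in> \<real> \<and> 0 \<le> Re (cinner v (A *v v)))"

definition separable :: "op2 \<Rightarrow> bool" where
  "separable M \<longleftrightarrow> (\<exists>(n::nat) (c::nat \<Rightarrow> real) A B.
      (\<forall>k<n. 0 \<le> c k \<and> psd (A k) \<and> psd (B k)) \<and>
      M = (\<Sum>k<n. c k *\<^sub>R kron (A k) (B k)))"

definition span2 :: "qvec2 \<Rightarrow> qvec2 \<Rightarrow> qvec2 set" where
  "span2 u w = {x *s u + y *s w | x y. True}"

definition is_projector_onto :: "op2 \<Rightarrow> qvec2 set \<Rightarrow> bool" where
  "is_projector_onto P S \<longleftrightarrow> hermitian P \<and> P ** P = P \<and> range (\<lambda>v. P *v v) = S"

definition phi_plus :: "real \<Rightarrow> qvec2" where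
  "phi_plus t = complex_of_real (sin t) *s ket2 False False + complex_of_real (cos t) *s ket2 True True"
definition phi_minus :: "real \<Rightarrow> qvec2" where
  "phi_minus t = complex_of_real (cos t) *s ket2 False False - complex_of_real (sin t) *s ket2 True True"
definition psi_plus :: "real \<Rightarrow> qvec2" where
  "psi_plus t = complex_of_real (sin t) *s ket2 False True + complex_of_real (cos t) *s ket2 True False"
definition psi_minus :: "real \<Rightarrow> qvec2" where
  "psi_minus t = complex_of_real (cos t) *s ket2 False True - complex_of_real (sin t) *s ket2 True False"

definition basisA :: "real \<Rightarrow> real \<Rightarrow> nat \<Rightarrow> qvec2" where
  "basisA \<alpha> \<beta> i =
     (if i = 1 then phi_minus \<alpha>
      else if i = 2 then psi_minus \<beta>
      else if i = 3 then complex_of_real (1 / sqrt 2) *s (phi_plus \<alpha> + psi_plus \<beta>)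
      else complex_of_real (1 / sqrt 2) *s (phi_plus \<alpha> - psi_plus \<beta>))"

end

theory Submission
  imports Defs
begin

text \<open>By the Peres--Horodecki criterion a separable operator has a positive semidefinite
  partial transpose, because the partial transpose of \<open>A \<otimes> B\<close> is \<open>A \<otimes> B\<^sup>T\<close>.
  The projector onto the span of the orthonormal vectors \<open>a\<^sub>i, a\<^sub>j\<close> is
  \<open>|a\<^sub>i\<rangle>\<langle>a\<^sub>i| + |a\<^sub>j\<rangle>\<langle>a\<^sub>j|\<close>, and its partial transpose takes a negative value on
  a suitable real vector. For the pairs {1,2} and {3,4} the two 2x2 principal minors on
  span{|00>,|11>} and span{|01>,|10>} are nonnegative only if
  \<open>sin \<alpha> cos \<alpha> = sin \<beta> cos \<beta>\<close>, which is exactly what \<open>\<alpha> \<noteq> \<beta>\<close> and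
  \<open>\<alpha> \<noteq> \<pi>/2 - \<beta>\<close> exclude. For the other pairs an explicit vector gives the value
  \<open>(sin \<alpha> cos \<alpha> + sin \<beta> cos \<beta>)(sin \<alpha> cos \<alpha> (sin \<beta> + cos \<beta>)\<^sup>2 - 1) < 0\<close>
  (for pairs containing 2, with \<open>\<alpha>\<close> and \<open>\<beta>\<close> exchanged in the second factor).\<close>

lemma cinner_add_right: "cinner z (x + y) = cinner z x + cinner z y"
  by (simp add: cinner_def sum.distrib algebra_simps)

lemma cinner_diff_right: "cinner z (x - y) = cinner z x - cinner z y"
  by (simp add: cinner_def sum_subtractf algebra_simps)

lemma cinner_smult_right: "cinner z (c *s x) = c * cinner z x"
  by (simp add: cinner_def sum_distrib_left algebra_simps)

lemma cnj_cinner: "cnj (cinner x y) = cinner y x"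
  by (simp add: cinner_def mult.commute)

lemma cinner_adjoint_mat: "cinner (A *v x) y = cinner x (adjoint_mat A *v y)"
proof -
  have "cinner (A *v x) y = (\<Sum>i\<in>UNIV. \<Sum>j\<in>UNIV. cnj (A$i$j) * cnj (x$j) * y$i)"
    by (simp add: cinner_def matrix_vector_mult_def sum_distrib_right)
  also have "\<dots> = (\<Sum>j\<in>UNIV. \<Sum>i\<in>UNIV. cnj (A$i$j) * cnj (x$j) * y$i)"
    by (rule sum.swap)
  also have "\<dots> = cinner x (adjoint_mat A *v y)"
    by (simp add: cinner_def adjoint_mat_def matrix_vector_mult_def sum_distrib_left mult_ac)
  finally show ?thesis .
qed

lemma cinner_self_eq_0_iff: "cinner u u = 0 \<longleftrightarrow> u = 0"
proof
  assume "cinner u u = 0"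
  moreover have "cinner u u = of_real (\<Sum>i\<in>UNIV. (cmod (u$i))^2)"
    unfolding cinner_def of_real_sum complex_norm_square by (simp add: mult.commute)
  ultimately have "(\<Sum>i\<in>UNIV. (cmod (u$i))^2) = 0"
    by (metis of_real_eq_0_iff)
  then show "u = 0"
    by (simp add: sum_nonneg_eq_0_iff vec_eq_iff)
qed (simp add: cinner_def)

lemma psd_zero: "psd 0"
  by (simp add: psd_def cinner_def)

lemma psd_add: "psd A \<Longrightarrow> psd B \<Longrightarrow> psd (A + B)"
  by (simp add: psd_def matrix_vector_mult_add_rdistrib cinner_add_right)

lemma psd_scaleR:
  assumes "0 \<le> c" "psd A"
  shows "psd (c *\<^sub>R A)"
proof -
  have "(c *\<^sub>R A) *v v = of_real c *s (A *v v)" for v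
    unfolding vec_eq_iff matrix_vector_mult_def vector_scaleR_component
    by (simp add: scaleR_conv_of_real sum_distrib_left mult.assoc)
  with assms show ?thesis
    by (simp add: psd_def cinner_smult_right)
qed

lemma psd_sum: "(\<And>k. k \<in> S \<Longrightarrow> psd (M k)) \<Longrightarrow> psd (\<Sum>k\<in>S. M k)"
  by (induction S rule: infinite_finite_induct) (simp_all add: psd_zero psd_add)

lemma psd_transpose:
  assumes "psd A" shows "psd (transpose A)"
  unfolding psd_def
proof
  fix v :: "complex ^ 'a"
  define w where "w = (\<chi> i. cnj (v$i))"
  have "cinner v (transpose A *v v) = (\<Sum>i\<in>UNIV. \<Sum>j\<in>UNIV. cnj (v$i) * A$j$i * v$j)"
    by (simp add: cinner_def matrix_vector_mult_def transpose_def sum_distrib_left mult.assoc)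
  also have "\<dots> = (\<Sum>j\<in>UNIV. \<Sum>i\<in>UNIV. cnj (v$i) * A$j$i * v$j)"
    by (rule sum.swap)
  also have "\<dots> = cinner w (A *v w)"
    by (simp add: cinner_def matrix_vector_mult_def w_def sum_distrib_left mult_ac)
  finally show "cinner v (transpose A *v v) \<in> \<real> \<and> 0 \<le> Re (cinner v (transpose A *v v))"
    using assms by (simp add: psd_def)
qed

lemma quadratic_form_nonneg_discriminant:
  fixes A B C :: real
  assumes "\<And>x y. 0 \<le> A * x^2 + 2 * C * x * y + B * y^2"
  shows "C^2 \<le> A * B"
proof (cases "A = 0")
  case False
  have "0 \<le> A * (-C)^2 + 2 * C * (-C) * A + B * A^2" by (rule assms)
  then have "0 \<le> A * (A * B - C^2)" by (simp add: power2_eq_square algebra_simps)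
  moreover have "0 \<le> A" using assms[of 1 0] by simp
  ultimately show ?thesis using False by (simp add: zero_le_mult_iff)
next
  case True
  have "C = 0"
  proof (rule ccontr)
    assume "C \<noteq> 0"
    have "0 \<le> A * (-(B+1)/(2*C))^2 + 2 * C * (-(B+1)/(2*C)) * 1 + B * 1^2" by (rule assms)
    also have "\<dots> = -1" using True \<open>C \<noteq> 0\<close> by (simp add: field_simps)
    finally show False by simp
  qed
  then show ?thesis using True by simp
qed

lemma cinner_matrix_vector_op1:
  fixes A :: op1
  shows "cinner (\<chi> b. if b then y else x) (A *v (\<chi> b. if b then y else x)) =
    cnj x * A$False$False * x + cnj x * A$False$True * y + cnj y * A$True$False * x + cnj y * A$True$True * y"
  by (simp add: cinner_def matrix_vector_mult_def UNIV_bool algebra_simps)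

lemma psd_op1_entries:
  fixes A :: op1
  assumes "psd A"
  defines "a \<equiv> A$False$False" and "b \<equiv> A$False$True" and "c \<equiv> A$True$False" and "d \<equiv> A$True$True"
  shows "Im a = 0" "Im d = 0" "0 \<le> Re a" "0 \<le> Re d" "c = cnj b" "(cmod b)^2 \<le> Re a * Re d"
proof -
  define Q where "Q x y = cnj x * a * x + cnj x * b * y + cnj y * c * x + cnj y * d * y" for x y
  have Q: "Q x y \<in> \<real> \<and> 0 \<le> Re (Q x y)" for x y
    using assms(1) cinner_matrix_vector_op1[of y x A] unfolding psd_def Q_def a_def b_def c_def d_def by metis
  from Q[of 1 0] show ia: "Im a = 0" and "0 \<le> Re a" by (auto simp: Q_def complex_is_Real_iff)
  from Q[of 0 1] show id: "Im d = 0" and d_nonneg: "0 \<le> Re d" by (auto simp: Q_def complex_is_Real_iff)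
  from Q[of 1 1] have "Im b + Im c = 0" using ia id by (auto simp: Q_def complex_is_Real_iff)
  moreover from Q[of 1 "\<i>"] have "Re b - Re c = 0" using ia id by (auto simp: Q_def complex_is_Real_iff)
  ultimately show cb: "c = cnj b" by (simp add: complex_eq_iff)
  have "((cmod b)^2)^2 \<le> Re a * ((cmod b)^2 * Re d)"
  proof (rule quadratic_form_nonneg_discriminant)
    fix s t :: real
    have "Re (Q (of_real s) (of_real t * cnj b)) = Re a * s^2 + 2 * (cmod b)^2 * s * t + (cmod b)^2 * Re d * t^2"
      using ia id cb unfolding Q_def cmod_power2 by (simp add: algebra_simps power2_eq_square)
    then show "0 \<le> Re a * s^2 + 2 * (cmod b)^2 * s * t + (cmod b)^2 * Re d * t^2"
      using Q by metis
  qed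
  then show "(cmod b)^2 \<le> Re a * Re d"
    using \<open>0 \<le> Re a\<close> d_nonneg by (cases "b = 0") (auto simp: power2_eq_square)
qed

text \<open>For 2x2 matrices this follows from the entry bounds of \<open>psd_op1_entries\<close>:
  Cauchy--Schwarz for the off-diagonal products and AM--GM for the diagonal ones.\<close>

lemma psd_trace_mult_op1:
  fixes A B :: op1
  assumes "psd A" "psd B"
  shows "trace (A ** B) \<in> \<real>" "0 \<le> Re (trace (A ** B))"
proof -
  note A = psd_op1_entries[OF assms(1)] and B = psd_op1_entries[OF assms(2)]
  define X where "X = Re (A$False$True) * Re (B$False$True) + Im (A$False$True) * Im (B$False$True)"
  have tr: "trace (A ** B) = A$False$False * B$False$False + A$False$True * B$True$False
      + A$True$False * B$False$True + A$True$True * B$True$True"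
    by (simp add: trace_def matrix_matrix_mult_def UNIV_bool)
  then show "trace (A ** B) \<in> \<real>"
    using A B by (simp add: complex_is_Real_iff)
  have re: "Re (trace (A ** B)) = Re (A$False$False) * Re (B$False$False) + Re (A$True$True) * Re (B$True$True) + 2 * X"
    using A B tr by (simp add: X_def)
  have "(cmod (A$False$True))^2 * (cmod (B$False$True))^2 - X^2
      = (Re (A$False$True) * Im (B$False$True) - Im (A$False$True) * Re (B$False$True))^2"
    unfolding X_def cmod_power2 by (simp add: power2_eq_square algebra_simps)
  then have "X^2 \<le> (cmod (A$False$True))^2 * (cmod (B$False$True))^2"
    by (metis diff_ge_0_iff_ge zero_le_power2)
  also have "\<dots> \<le> (Re (A$False$False) * Re (A$True$True)) * (Re (B$False$False) * Re (B$True$True))"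
    using A B by (intro mult_mono) auto
  also have "\<dots> \<le> ((Re (A$False$False) * Re (B$False$False) + Re (A$True$True) * Re (B$True$True)) / 2)^2"
    using sum_squares_ge_zero[of "Re (A$False$False) * Re (B$False$False) - Re (A$True$True) * Re (B$True$True)" 0]
    by (simp add: power2_eq_square algebra_simps)
  finally have "\<bar>X\<bar>^2 \<le> ((Re (A$False$False) * Re (B$False$False) + Re (A$True$True) * Re (B$True$True)) / 2)^2"
    by simp
  then have "\<bar>X\<bar> \<le> (Re (A$False$False) * Re (B$False$False) + Re (A$True$True) * Re (B$True$True)) / 2"
    by (rule power2_le_imp_le) (use A B in simp)
  then show "0 \<le> Re (trace (A ** B))"
    unfolding re by (simp add: abs_le_iff)
qed

lemma sum_UNIV_prod: "(\<Sum>p\<in>UNIV. f p) = (\<Sum>a\<in>UNIV. \<Sum>b\<in>UNIV. f (a, b))"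
  by (simp add: sum.cartesian_product)

lemma psd_kron:
  assumes "psd A" "psd B"
  shows "psd (kron A B)"
  unfolding psd_def
proof
  fix v :: qvec2
  txt \<open>Contracting \<open>v\<close> with \<open>A\<close> over the first factor gives a positive \<open>G\<close>
    with \<open>\<langle>v, (A \<otimes> B) v\<rangle> = tr (B G\<^sup>T)\<close>.\<close>
  define G :: op1 where "G = (\<chi> b b'. \<Sum>a\<in>UNIV. \<Sum>a'\<in>UNIV. cnj (v$(a,b)) * A$a$a' * v$(a',b'))"
  have "psd G"
    unfolding psd_def
  proof
    fix x :: "complex ^ bool"
    define u :: "complex ^ bool" where "u = (\<chi> a. \<Sum>b\<in>UNIV. v$(a,b) * x$b)"
    have "cinner x (G *v x) = cinner u (A *v u)"
      by (simp add: cinner_def matrix_vector_mult_def G_def u_def UNIV_bool algebra_simps)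
    then show "cinner x (G *v x) \<in> \<real> \<and> 0 \<le> Re (cinner x (G *v x))"
      using assms(1) by (simp add: psd_def)
  qed
  moreover have "cinner v (kron A B *v v) = trace (B ** transpose G)"
    by (simp add: cinner_def matrix_vector_mult_def kron_def trace_def matrix_matrix_mult_def
        transpose_def G_def sum_UNIV_prod UNIV_bool algebra_simps)
  ultimately show "cinner v (kron A B *v v) \<in> \<real> \<and> 0 \<le> Re (cinner v (kron A B *v v))"
    using psd_trace_mult_op1[OF assms(2) psd_transpose] by simp
qed

definition partial_transpose :: "op2 \<Rightarrow> op2" where
  "partial_transpose M = (\<chi> p q. M $ (fst p, snd q) $ (fst q, snd p))"

lemma partial_transpose_kron: "partial_transpose (kron A B) = kron A (transpose B)"
  by (simp add: partial_transpose_def kron_def transpose_def)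

lemma partial_transpose_scaleR_sum:
  "partial_transpose (\<Sum>k\<in>S. c k *\<^sub>R M k) = (\<Sum>k\<in>S. c k *\<^sub>R partial_transpose (M k))"
  by (simp add: partial_transpose_def vec_eq_iff sum_component)

lemma separable_imp_psd_partial_transpose:
  assumes "separable M"
  shows "psd (partial_transpose M)"
  using assms unfolding separable_def
proof (elim exE conjE)
  fix n c A B
  assume nonneg: "\<forall>k<n. 0 \<le> c k \<and> psd (A k) \<and> psd (B k)"
    and M: "M = (\<Sum>k<n. c k *\<^sub>R kron (A k) (B k))"
  have "partial_transpose M = (\<Sum>k<n. c k *\<^sub>R kron (A k) (transpose (B k)))"
    unfolding M partial_transpose_scaleR_sum partial_transpose_kron ..
  also have "psd \<dots>"
    using nonneg by (intro psd_sum psd_scaleR psd_kron psd_transpose) auto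
  finally show ?thesis .
qed

definition outer :: "complex ^ 'n \<Rightarrow> complex ^ 'n \<Rightarrow> complex ^ 'n ^ 'n" where
  "outer u v = (\<chi> i j. u$i * cnj (v$j))"

lemma outer_matrix_vector_mult: "outer u v *v z = cinner v z *s u"
  by (simp add: outer_def cinner_def matrix_vector_mult_def vec_eq_iff sum_distrib_left mult_ac)

lemma projector_fixes_span2:
  assumes "is_projector_onto P (span2 u v)" "x \<in> span2 u v"
  shows "P *v x = x"
proof -
  obtain t where t: "x = P *v t"
    using assms unfolding is_projector_onto_def by auto
  have "P *v (P *v t) = (P ** P) *v t"
    by (simp add: matrix_vector_mul_assoc)
  then show ?thesis
    using assms(1) t unfolding is_projector_onto_def by simp
qed

lemma projector_kills_orthogonal:
  assumes "is_projector_onto P (span2 u v)" "cinner u z = 0" "cinner v z = 0"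
  shows "P *v z = 0"
proof -
  have "P *v z \<in> span2 u v"
    using assms(1) unfolding is_projector_onto_def by blast
  then obtain x y where xy: "P *v z = x *s u + y *s v"
    unfolding span2_def by auto
  have "cinner (P *v z) (P *v z) = cinner z (P *v (P *v z))"
    using assms(1) unfolding cinner_adjoint_mat is_projector_onto_def hermitian_def by simp
  also have "\<dots> = cinner z (P *v z)"
    using assms(1) unfolding is_projector_onto_def by (simp add: matrix_vector_mul_assoc)
  also have "\<dots> = 0"
    using assms(2,3) unfolding xy cinner_add_right cinner_smult_right
    by (metis cnj_cinner complex_cnj_zero mult_zero_right add_0)
  finally show ?thesis
    by (simp add: cinner_self_eq_0_iff)
qed

lemma projector_onto_orthonormal_span2:
  assumes P: "is_projector_onto P (span2 u v)"
    and "cinner u u = 1" "cinner v v = 1" "cinner u v = 0"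
  shows "P = outer u u + outer v v"
proof (rule matrix_eq[THEN iffD2], intro allI)
  fix z
  define z\<^sub>S where "z\<^sub>S = cinner u z *s u + cinner v z *s v"
  have "cinner v u = 0"
    using assms(4) cnj_cinner[of u v] by simp
  then have "cinner u (z - z\<^sub>S) = 0" "cinner v (z - z\<^sub>S) = 0"
    using assms(2-4) by (simp_all add: z\<^sub>S_def cinner_diff_right cinner_add_right cinner_smult_right)
  then have "P *v (z - z\<^sub>S) = 0"
    by (rule projector_kills_orthogonal[OF P])
  moreover have "P *v z\<^sub>S = z\<^sub>S"
    using P by (rule projector_fixes_span2) (auto simp: span2_def z\<^sub>S_def)
  ultimately show "P *v z = (outer u u + outer v v) *v z"
    by (simp add: matrix_vector_mult_diff_distrib matrix_vector_mult_add_rdistrib outer_matrix_vector_mult z\<^sub>S_def)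
qed

lemma sin_mult_cos_nonneg: "(x::real) \<in> {0..pi/2} \<Longrightarrow> 0 \<le> sin x * cos x"
  by (auto intro!: mult_nonneg_nonneg sin_ge_zero cos_ge_zero)

lemma sin_mult_cos_le_half: "sin (x::real) * cos x \<le> 1/2"
  using sin_double[of x] sin_le_one[of "2 * x"] by simp

lemma sin_mult_cos_eqD:
  assumes "\<alpha> \<in> {0..pi/2}" "\<beta> \<in> {0..pi/2}" "sin \<alpha> * cos \<alpha> = sin \<beta> * cos \<beta>"
  shows "\<alpha> = \<beta> \<or> \<alpha> = pi/2 - \<beta>"
proof -
  have "cos \<bar>pi/2 - 2*\<alpha>\<bar> = cos \<bar>pi/2 - 2*\<beta>\<bar>"
    using assms(3) by (simp add: cos_diff sin_double)
  then have "\<bar>pi/2 - 2*\<alpha>\<bar> = \<bar>pi/2 - 2*\<beta>\<bar>"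
    using assms(1,2) cos_inj_pi[of "\<bar>pi/2 - 2*\<alpha>\<bar>" "\<bar>pi/2 - 2*\<beta>\<bar>"] by auto
  then show ?thesis by (auto simp: abs_if split: if_splits)
qed

lemma sin_mult_cos_add_pos:
  assumes "\<alpha> \<in> {0..pi/2}" "\<beta> \<in> {0..pi/2}" "sin \<alpha> * cos \<alpha> \<noteq> sin \<beta> * cos \<beta>"
  shows "0 < sin \<alpha> * cos \<alpha> + sin \<beta> * cos \<beta>"
  using sin_mult_cos_nonneg[OF assms(1)] sin_mult_cos_nonneg[OF assms(2)] assms(3) by linarith

lemma sin_mult_cos_mult_sin_add_cos_sq_less_1:
  assumes "\<alpha> \<in> {0..pi/2}" "\<beta> \<in> {0..pi/2}" "sin \<alpha> * cos \<alpha> \<noteq> sin \<beta> * cos \<beta>"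
  shows "sin \<alpha> * cos \<alpha> * (sin \<beta> + cos \<beta>)^2 < 1"
proof -
  define x y where "x = sin \<alpha> * cos \<alpha>" and "y = sin \<beta> * cos \<beta>"
  have "(sin \<beta> + cos \<beta>)^2 = 1 + 2 * y"
    by (simp add: y_def power2_sum)
  moreover have "0 \<le> x" "x \<le> 1/2" "0 \<le> y" "y \<le> 1/2" "x \<noteq> y"
    using sin_mult_cos_nonneg[OF assms(1)] sin_mult_cos_nonneg[OF assms(2)] sin_mult_cos_le_half assms(3)
    by (auto simp: x_def y_def)
  moreover have "x * (1 + 2 * y) < 1" if "0 \<le> x" "x \<le> 1/2" "0 \<le> y" "y \<le> 1/2" "x \<noteq> y"
  proof (cases "x = 1/2")
    case False
    then have "x * (1 + 2 * y) \<le> x * 2" using that by (intro mult_left_mono) auto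
    then show ?thesis using that False by linarith
  next
    case True
    then have "x * (1 + 2 * y) = 1/2 + y" by (subst True) simp
    then show ?thesis using that True by linarith
  qed
  ultimately show ?thesis by (simp add: x_def)
qed

lemma cinner_basisA:
  assumes "k \<in> {1..4}" "m \<in> {1..4}"
  shows "cinner (basisA \<alpha> \<beta> k) (basisA \<alpha> \<beta> m) = (if k = m then 1 else 0)"
proof -
  have "k \<in> {1,2,3,4}" "m \<in> {1,2,3,4}" using assms by auto
  moreover have "cos x * (cos x * 2) + sin x * (sin x * 2) = 2" for x :: real
    using sin_cos_squared_add3[of x] by algebra
  ultimately show ?thesis
    by (auto simp: cinner_def sum_UNIV_prod UNIV_bool basisA_def phi_plus_def phi_minus_def
        psi_plus_def psi_minus_def ket2_def complex_eq_iff field_simps)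
qed

definition basisA_coeff :: "real \<Rightarrow> real \<Rightarrow> nat \<Rightarrow> bool \<times> bool \<Rightarrow> real" where
  "basisA_coeff \<alpha> \<beta> k p = Re (basisA \<alpha> \<beta> k $ p)"

lemma basisA_coeff_eq:
  "basisA_coeff \<alpha> \<beta> k (a, b) =
    (if k = 1 then (if a \<noteq> b then 0 else if a then - sin \<alpha> else cos \<alpha>)
     else if k = 2 then (if a = b then 0 else if a then - sin \<beta> else cos \<beta>)
     else if k = 3 then 1 / sqrt 2 * (if a = b then (if a then cos \<alpha> else sin \<alpha>) else if a then cos \<beta> else sin \<beta>)
     else 1 / sqrt 2 * (if a = b then (if a then cos \<alpha> else sin \<alpha>) else if a then - cos \<beta> else - sin \<beta>))"
  by (simp add: basisA_coeff_def basisA_def phi_plus_def phi_minus_def psi_plus_def psi_minus_def ket2_def)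

lemma basisA_component: "basisA \<alpha> \<beta> k $ p = of_real (basisA_coeff \<alpha> \<beta> k p)"
  by (simp add: basisA_coeff_def complex_eq_iff basisA_def phi_plus_def phi_minus_def psi_plus_def psi_minus_def ket2_def)

definition basis_pair_projector :: "real \<Rightarrow> real \<Rightarrow> nat \<Rightarrow> nat \<Rightarrow> op2" where
  "basis_pair_projector \<alpha> \<beta> k m =
     outer (basisA \<alpha> \<beta> k) (basisA \<alpha> \<beta> k) + outer (basisA \<alpha> \<beta> m) (basisA \<alpha> \<beta> m)"

lemma partial_transpose_basis_pair_projector_entry:
  "partial_transpose (basis_pair_projector \<alpha> \<beta> k m) $ p $ q = of_real
     (basisA_coeff \<alpha> \<beta> k (fst p, snd q) * basisA_coeff \<alpha> \<beta> k (fst q, snd p) +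
      basisA_coeff \<alpha> \<beta> m (fst p, snd q) * basisA_coeff \<alpha> \<beta> m (fst q, snd p))"
  by (simp add: partial_transpose_def basis_pair_projector_def outer_def basisA_component)

text \<open>\<open>\<langle>w, (|a\<^sub>k\<rangle>\<langle>a\<^sub>k| + |a\<^sub>m\<rangle>\<langle>a\<^sub>m|)\<^sup>T\<^sup>B w\<rangle>\<close> for a real vector \<open>w\<close>.\<close>

definition pt_quadratic_form :: "real \<Rightarrow> real \<Rightarrow> nat \<Rightarrow> nat \<Rightarrow> (bool \<times> bool \<Rightarrow> real) \<Rightarrow> real" where
  "pt_quadratic_form \<alpha> \<beta> k m w = (\<Sum>p\<in>UNIV. \<Sum>q\<in>UNIV. w p * w q *
     (basisA_coeff \<alpha> \<beta> k (fst p, snd q) * basisA_coeff \<alpha> \<beta> k (fst q, snd p) +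
      basisA_coeff \<alpha> \<beta> m (fst p, snd q) * basisA_coeff \<alpha> \<beta> m (fst q, snd p)))"

lemma pt_quadratic_form_nonneg:
  assumes "psd (partial_transpose (basis_pair_projector \<alpha> \<beta> k m))"
  shows "0 \<le> pt_quadratic_form \<alpha> \<beta> k m w"
proof -
  define v :: qvec2 where "v = (\<chi> p. complex_of_real (w p))"
  have "cinner v (partial_transpose (basis_pair_projector \<alpha> \<beta> k m) *v v) = of_real (pt_quadratic_form \<alpha> \<beta> k m w)"
    by (simp add: v_def pt_quadratic_form_def cinner_def matrix_vector_mult_def partial_transpose_basis_pair_projector_entry
        sum_distrib_left mult_ac)
  then show ?thesis
    using assms unfolding psd_def by (metis Re_complex_of_real)
qed

lemma psd_partial_transpose_projector_12D:
  assumes "psd (partial_transpose (basis_pair_projector \<alpha> \<beta> 1 2))"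
  shows "(sin \<beta> * cos \<beta>)^2 \<le> (sin \<alpha> * cos \<alpha>)^2" "(sin \<alpha> * cos \<alpha>)^2 \<le> (sin \<beta> * cos \<beta>)^2"
proof -
  have "(- (sin \<beta> * cos \<beta>))^2 \<le> (cos \<alpha>)^2 * (sin \<alpha>)^2"
  proof (rule quadratic_form_nonneg_discriminant)
    fix x y :: real
    show "0 \<le> (cos \<alpha>)^2 * x^2 + 2 * (- (sin \<beta> * cos \<beta>)) * x * y + (sin \<alpha>)^2 * y^2"
      using pt_quadratic_form_nonneg[OF assms, of "\<lambda>p. if p = (False,False) then x else if p = (True,True) then y else 0"]
      by (simp add: pt_quadratic_form_def sum_UNIV_prod UNIV_bool basisA_coeff_eq power2_eq_square algebra_simps)
  qed
  then show "(sin \<beta> * cos \<beta>)^2 \<le> (sin \<alpha> * cos \<alpha>)^2"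
    by (simp add: power_mult_distrib mult.commute)
  have "(- (sin \<alpha> * cos \<alpha>))^2 \<le> (cos \<beta>)^2 * (sin \<beta>)^2"
  proof (rule quadratic_form_nonneg_discriminant)
    fix x y :: real
    show "0 \<le> (cos \<beta>)^2 * x^2 + 2 * (- (sin \<alpha> * cos \<alpha>)) * x * y + (sin \<beta>)^2 * y^2"
      using pt_quadratic_form_nonneg[OF assms, of "\<lambda>p. if p = (False,True) then x else if p = (True,False) then y else 0"]
      by (simp add: pt_quadratic_form_def sum_UNIV_prod UNIV_bool basisA_coeff_eq power2_eq_square algebra_simps)
  qed
  then show "(sin \<alpha> * cos \<alpha>)^2 \<le> (sin \<beta> * cos \<beta>)^2"
    by (simp add: power_mult_distrib mult.commute)
qed

lemma psd_partial_transpose_projector_34D: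
  assumes "psd (partial_transpose (basis_pair_projector \<alpha> \<beta> 3 4))"
  shows "(sin \<beta> * cos \<beta>)^2 \<le> (sin \<alpha> * cos \<alpha>)^2" "(sin \<alpha> * cos \<alpha>)^2 \<le> (sin \<beta> * cos \<beta>)^2"
proof -
  have "(sin \<beta> * cos \<beta>)^2 \<le> (sin \<alpha>)^2 * (cos \<alpha>)^2"
  proof (rule quadratic_form_nonneg_discriminant)
    fix x y :: real
    show "0 \<le> (sin \<alpha>)^2 * x^2 + 2 * (sin \<beta> * cos \<beta>) * x * y + (cos \<alpha>)^2 * y^2"
      using pt_quadratic_form_nonneg[OF assms, of "\<lambda>p. if p = (False,False) then x else if p = (True,True) then y else 0"]
      by (simp add: pt_quadratic_form_def sum_UNIV_prod UNIV_bool basisA_coeff_eq power2_eq_square algebra_simps)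
  qed
  then show "(sin \<beta> * cos \<beta>)^2 \<le> (sin \<alpha> * cos \<alpha>)^2"
    by (simp add: power_mult_distrib)
  have "(sin \<alpha> * cos \<alpha>)^2 \<le> (sin \<beta>)^2 * (cos \<beta>)^2"
  proof (rule quadratic_form_nonneg_discriminant)
    fix x y :: real
    show "0 \<le> (sin \<beta>)^2 * x^2 + 2 * (sin \<alpha> * cos \<alpha>) * x * y + (cos \<beta>)^2 * y^2"
      using pt_quadratic_form_nonneg[OF assms, of "\<lambda>p. if p = (False,True) then x else if p = (True,False) then y else 0"]
      by (simp add: pt_quadratic_form_def sum_UNIV_prod UNIV_bool basisA_coeff_eq power2_eq_square algebra_simps)
  qed
  then show "(sin \<alpha> * cos \<alpha>)^2 \<le> (sin \<beta> * cos \<beta>)^2"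
    by (simp add: power_mult_distrib)
qed

lemma pt_quadratic_form_13_14:
  fixes \<alpha> \<beta> :: real
  defines "t \<equiv> sin \<beta> + cos \<beta>"
  shows "pt_quadratic_form \<alpha> \<beta> 1 3 (\<lambda>p. if p = (False,False) then sin \<alpha> * t else if p = (True,True) then cos \<alpha> * t else -1)
      = (sin \<alpha> * cos \<alpha> + sin \<beta> * cos \<beta>) * (sin \<alpha> * cos \<alpha> * t^2 - 1)"
    and "pt_quadratic_form \<alpha> \<beta> 1 4 (\<lambda>p. if p = (False,False) then sin \<alpha> * t else if p = (True,True) then cos \<alpha> * t else 1)
      = (sin \<alpha> * cos \<alpha> + sin \<beta> * cos \<beta>) * (sin \<alpha> * cos \<alpha> * t^2 - 1)"
  unfolding t_def by (simp_all add: pt_quadratic_form_def sum_UNIV_prod UNIV_bool basisA_coeff_eq)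
    (use sin_cos_squared_add[of \<alpha>] sin_cos_squared_add[of \<beta>] in algebra)+

lemma pt_quadratic_form_23_24:
  fixes \<alpha> \<beta> :: real
  defines "t \<equiv> sin \<alpha> + cos \<alpha>"
  shows "pt_quadratic_form \<alpha> \<beta> 2 3 (\<lambda>p. if p = (False,True) then sin \<beta> * t else if p = (True,False) then cos \<beta> * t else -1)
      = (sin \<alpha> * cos \<alpha> + sin \<beta> * cos \<beta>) * (sin \<beta> * cos \<beta> * t^2 - 1)"
    and "pt_quadratic_form \<alpha> \<beta> 2 4 (\<lambda>p. if p = (False,True) then sin \<beta> * t else if p = (True,False) then cos \<beta> * t else 1)
      = (sin \<alpha> * cos \<alpha> + sin \<beta> * cos \<beta>) * (sin \<beta> * cos \<beta> * t^2 - 1)"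
  unfolding t_def by (simp_all add: pt_quadratic_form_def sum_UNIV_prod UNIV_bool basisA_coeff_eq)
    (use sin_cos_squared_add[of \<alpha>] sin_cos_squared_add[of \<beta>] in algebra)+

lemma psd_partial_transpose_projector_13_14D:
  fixes \<alpha> \<beta> :: real
  assumes "m \<in> {3, 4}" "psd (partial_transpose (basis_pair_projector \<alpha> \<beta> 1 m))"
  shows "0 \<le> (sin \<alpha> * cos \<alpha> + sin \<beta> * cos \<beta>) * (sin \<alpha> * cos \<alpha> * (sin \<beta> + cos \<beta>)^2 - 1)"
  using assms(1)
proof (elim insertE emptyE)
  assume "m = 3"
  with assms(2) show ?thesis
    by (subst pt_quadratic_form_13_14(1)[symmetric]) (simp add: pt_quadratic_form_nonneg)
next
  assume "m = 4"
  with assms(2) show ?thesis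
    by (subst pt_quadratic_form_13_14(2)[symmetric]) (simp add: pt_quadratic_form_nonneg)
qed

lemma psd_partial_transpose_projector_23_24D:
  fixes \<alpha> \<beta> :: real
  assumes "m \<in> {3, 4}" "psd (partial_transpose (basis_pair_projector \<alpha> \<beta> 2 m))"
  shows "0 \<le> (sin \<alpha> * cos \<alpha> + sin \<beta> * cos \<beta>) * (sin \<beta> * cos \<beta> * (sin \<alpha> + cos \<alpha>)^2 - 1)"
  using assms(1)
proof (elim insertE emptyE)
  assume "m = 3"
  with assms(2) show ?thesis
    by (subst pt_quadratic_form_23_24(1)[symmetric]) (simp add: pt_quadratic_form_nonneg)
next
  assume "m = 4"
  with assms(2) show ?thesis
    by (subst pt_quadratic_form_23_24(2)[symmetric]) (simp add: pt_quadratic_form_nonneg)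
qed

lemma basis_pair_projector_commute: "basis_pair_projector \<alpha> \<beta> k m = basis_pair_projector \<alpha> \<beta> m k"
  by (simp add: basis_pair_projector_def add.commute)

lemma partial_transpose_basis_pair_projector_not_psd:
  assumes \<alpha>: "\<alpha> \<in> {0..pi/2}" and \<beta>: "\<beta> \<in> {0..pi/2}" and ne: "sin \<alpha> * cos \<alpha> \<noteq> sin \<beta> * cos \<beta>"
    and km: "(k, m) \<in> {(1,2), (1,3), (1,4), (2,3), (2,4), (3,4)}"
  shows "\<not> psd (partial_transpose (basis_pair_projector \<alpha> \<beta> k m))"
proof
  assume psd: "psd (partial_transpose (basis_pair_projector \<alpha> \<beta> k m))"
  have pos: "0 < sin \<alpha> * cos \<alpha> + sin \<beta> * cos \<beta>"
    using \<alpha> \<beta> ne by (rule sin_mult_cos_add_pos)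
  have squares_ne: "(sin \<alpha> * cos \<alpha>)^2 \<noteq> (sin \<beta> * cos \<beta>)^2"
    using ne sin_mult_cos_nonneg[OF \<alpha>] sin_mult_cos_nonneg[OF \<beta>] by (simp add: power2_eq_iff_nonneg)
  from km consider "k = 1" "m = 2" | "k = 3" "m = 4" | "k = 1" "m \<in> {3, 4}" | "k = 2" "m \<in> {3, 4}"
    by auto
  then show False
  proof cases
    case 1
    with psd have "psd (partial_transpose (basis_pair_projector \<alpha> \<beta> 1 2))"
      by simp
    with squares_ne show False
      using psd_partial_transpose_projector_12D by fastforce
  next
    case 2
    with psd have "psd (partial_transpose (basis_pair_projector \<alpha> \<beta> 3 4))"
      by simp
    with squares_ne show False
      using psd_partial_transpose_projector_34D by fastforce
  next
    case 3
    then have "0 \<le> (sin \<alpha> * cos \<alpha> + sin \<beta> * cos \<beta>) * (sin \<alpha> * cos \<alpha> * (sin \<beta> + cos \<beta>)^2 - 1)"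
      using psd by (intro psd_partial_transpose_projector_13_14D) simp_all
    moreover have "sin \<alpha> * cos \<alpha> * (sin \<beta> + cos \<beta>)^2 < 1"
      using \<alpha> \<beta> ne by (rule sin_mult_cos_mult_sin_add_cos_sq_less_1)
    ultimately show False
      using pos by (simp add: zero_le_mult_iff)
  next
    case 4
    then have "0 \<le> (sin \<alpha> * cos \<alpha> + sin \<beta> * cos \<beta>) * (sin \<beta> * cos \<beta> * (sin \<alpha> + cos \<alpha>)^2 - 1)"
      using psd by (intro psd_partial_transpose_projector_23_24D) simp_all
    moreover have "sin \<beta> * cos \<beta> * (sin \<alpha> + cos \<alpha>)^2 < 1"
      using \<beta> \<alpha> ne[symmetric] by (rule sin_mult_cos_mult_sin_add_cos_sq_less_1)
    ultimately show False
      using pos by (simp add: zero_le_mult_iff)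
  qed
qed

theorem proposition1:
  fixes \<alpha> \<beta> :: real and i j :: nat and P :: op2
  assumes "\<alpha> \<in> {0..pi/2}" and "\<beta> \<in> {0..pi/2}"
    and "\<alpha> \<noteq> \<beta>" and "\<alpha> \<noteq> pi/2 - \<beta>"
    and "i \<in> {1..4}" and "j \<in> {1..4}" and "i \<noteq> j"
    and "is_projector_onto P (span2 (basisA \<alpha> \<beta> i) (basisA \<alpha> \<beta> j))"
  shows "\<not> separable P"
proof
  assume "separable P"
  then have "psd (partial_transpose P)"
    by (rule separable_imp_psd_partial_transpose)
  moreover have "P = basis_pair_projector \<alpha> \<beta> i j"
    unfolding basis_pair_projector_def
    by (rule projector_onto_orthonormal_span2[OF assms(8)]) (use assms(5-7) in \<open>simp_all add: cinner_basisA\<close>)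
  ultimately have psd: "psd (partial_transpose (basis_pair_projector \<alpha> \<beta> (min i j) (max i j)))"
    by (cases "i \<le> j") (simp_all add: min_def max_def basis_pair_projector_commute)
  have ne: "sin \<alpha> * cos \<alpha> \<noteq> sin \<beta> * cos \<beta>"
    using sin_mult_cos_eqD[OF assms(1,2)] assms(3,4) by blast
  have pair: "(min i j, max i j) \<in> {(1,2), (1,3), (1,4), (2,3), (2,4), (3,4)}"
  proof -
    have "i \<in> {1,2,3,4}" "j \<in> {1,2,3,4}"
      using assms(5,6) by auto
    then show ?thesis
      using assms(7) by (auto simp: min_def max_def)
  qed
  show False
    using partial_transpose_basis_pair_projector_not_psd[OF assms(1,2) ne pair] psd by contradiction
qed

end
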